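(* Let $\gamma>0$ and assume the minimum norm solution $\mathbf{u}^*=\mathbf{A}^\dagger\mathbf{b}$ satisfies $\mathbf{L}\mathbf{u}^*=\mathbf{g}$. Let $\tilde{\mathbf{b}}\in\mathbb{R}^m$ and let $\tilde{\mathbf{u}}^*_\gamma$ be a solution of $$\big((\mathbf{I}+\gamma\mathbf{A}^t\mathbf{A})\mathbf{A}^t\mathbf{A}+\gamma\mathbf{L}^t\mathbf{L}\big)\tilde{\mathbf{u}}^*_\gamma=(\mathbf{I}+\gamma\mathbf{A}^t\mathbf{A})\mathbf{A}^t\tilde{\mathbf{b}}+\gamma\mathbf{L}^t\mathbf{g},$$ and assume the same system with $\tilde{\mathbf{b}}$ replaced by $\mathbf{b}$ has a unique solution. Then $$\|\mathbf{A}\mathbf{u}^*-\mathbf{A}\tilde{\mathbf{u}}^*_\gamma\|_m\le\|(\mathbf{I}+\gamma\mathbf{A}\mathbf{A}^t)(\mathbf{b}-\tilde{\mathbf{b}})\|_m.$$ Moreover, if $m\ge n$ and $\mathbf{A}$ has full column rank $n$, then $$\|\mathbf{u}^*-\tilde{\mathbf{u}}^*_\gamma\|_n\le\frac{1}{\sqrt{\lambda_n}}\|(\mathbf{I}+\gamma\mathbf{A}\mathbf{A}^t)(\mathbf{b}-\tilde{\mathbf{b}})\|_m,$$ where $\lambda_n>0$ is the smallest eigenvalue of $\mathbf{A}^t\mathbf{A}$.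
   Context: $\mathbf{A}\in\mathbb{R}^{m\times n}$, $\mathbf{b}\in\mathbb{R}^m$, $\mathbf{L}\in\mathbb{R}^{p\times n}$, $\mathbf{g}\in\mathbb{R}^p$; $\mathbf{A}^\dagger$ is the Moore–Penrose pseudoinverse; $\|\cdot\|_m,\|\cdot\|_n$ are Euclidean norms; $\mathbf{I}$ denotes identity matrices of appropriate sizes. *)

theory Defs
  imports "HOL-Analysis.Analysis"
begin

definition penrose :: "real^'n^'m \<Rightarrow> real^'m^'n \<Rightarrow> bool" where
  "penrose A X \<longleftrightarrow> A ** X ** A = A \<and> X ** A ** X = X \<and>
     transpose (A ** X) = A ** X \<and> transpose (X ** A) = X ** A"

definition pinv :: "real^'n^'m \<Rightarrow> real^'m^'n" where
  "pinv A = (THE X. penrose A X)"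

definition eigenvalues :: "real^'n^'n \<Rightarrow> real set" where
  "eigenvalues M = {c. \<exists>v. v \<noteq> 0 \<and> M *v v = c *\<^sub>R v}"

definition smallest_eigenvalue :: "real^'n^'n \<Rightarrow> real" where
  "smallest_eigenvalue M = Min (eigenvalues M)"

end

theory Submission
  imports Defs
begin

text \<open>Let \<open>u = pinv A b\<close>, \<open>S = A\<^sup>T A\<close>, \<open>e = u - ut\<close> and \<open>r = (I + \<gamma> A A\<^sup>T) (b - bt)\<close>.
  By the Penrose conditions \<open>u\<close> satisfies the normal equations \<open>S u = A\<^sup>T b\<close>; together with
  \<open>L u = g\<close> it solves the regularized system for \<open>b\<close>. Subtracting the system for \<open>bt\<close> gives
  \<open>(S + \<gamma> S\<^sup>2 + \<gamma> L\<^sup>T L) e = A\<^sup>T r\<close>, and pairing with \<open>e\<close> yields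
  \<open>|A e|\<^sup>2 + \<gamma> |S e|\<^sup>2 + \<gamma> |L e|\<^sup>2 = (A e) \<bullet> r \<le> |A e| |r|\<close>.
  For full column rank, the smallest eigenvalue \<open>\<lambda>\<close> of \<open>S\<close> is the minimum of \<open>|A v|\<^sup>2\<close> on
  the unit sphere, so \<open>sqrt \<lambda> |e| \<le> |A e|\<close>.

  Since \<open>pinv\<close> is defined by a definite description, the Penrose conditions must first be
  shown solvable: the map sending \<open>y\<close> to the unique solution of the normal equations in the
  row space of \<open>A\<close> satisfies them.\<close>

(* The library simp rule rewrites transpose A *v x to x v* A, hiding the normal equations. *)
declare transpose_matrix_vector [simp del]

lemma inner_transpose_mult:
  fixes A :: "real^'n^'m"
  shows "x \<bullet> (transpose A *v y) = (A *v x) \<bullet> y"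
  by (metis dot_lmul_matrix transpose_matrix_vector inner_commute)

lemma inner_gram_mult:
  fixes A :: "real^'n^'m"
  shows "x \<bullet> (transpose A *v (A *v x)) = norm (A *v x) ^ 2"
  by (simp add: inner_transpose_mult power2_norm_eq_inner)

lemma gram_mult_eq_0_iff:
  fixes A :: "real^'n^'m"
  shows "transpose A *v (A *v x) = 0 \<longleftrightarrow> A *v x = 0"
proof
  assume "transpose A *v (A *v x) = 0"
  then have "norm (A *v x) ^ 2 = 0" using inner_gram_mult [of x A] by simp
  then show "A *v x = 0" by simp
qed simp

lemma symmetric_gram:
  fixes A :: "real^'n^'m"
  shows "transpose (transpose A ** A) = transpose A ** A"
  by (simp add: matrix_transpose_mul)

definition row_space :: "real^'n^'m \<Rightarrow> (real^'n) set" where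
  "row_space A = range ((*v) (transpose A))"

lemma subspace_row_space: "subspace (row_space A)"
  unfolding row_space_def by (simp add: subspace_UNIV linear_subspace_image)

lemma orthogonal_row_space:
  fixes A :: "real^'n^'m"
  assumes "A *v v = 0" "p \<in> row_space A"
  shows "v \<bullet> p = 0"
  using assms by (auto simp: row_space_def inner_transpose_mult)

lemma gram_inj_on_row_space:
  fixes A :: "real^'n^'m"
  assumes "x \<in> row_space A" "y \<in> row_space A"
    and "transpose A *v (A *v x) = transpose A *v (A *v y)"
  shows "x = y"
proof -
  have "x - y \<in> row_space A"
    using assms(1,2) by (simp add: subspace_diff subspace_row_space)
  have "transpose A *v (A *v (x - y)) = 0"
    using assms(3) by (simp add: matrix_vector_mult_diff_distrib)
  then have "A *v (x - y) = 0" by (simp only: gram_mult_eq_0_iff)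
  then have "(x - y) \<bullet> (x - y) = 0"
    using \<open>x - y \<in> row_space A\<close> by (rule orthogonal_row_space)
  then show ?thesis by simp
qed

text \<open>The Gram map is injective on the row space, which it maps into itself; by dimension
  it is onto, and the row space contains every right-hand side of the normal equations.\<close>
lemma normal_equation_solvable_in_row_space:
  fixes A :: "real^'n^'m"
  shows "\<exists>x \<in> row_space A. transpose A *v (A *v x) = transpose A *v y"
proof -
  let ?G = "\<lambda>x. transpose A *v (A *v x)"
  have lin: "linear ?G" by (simp add: matrix_vector_mul_assoc)
  have inj: "inj_on ?G (span (row_space A))"
    unfolding span_eq_iff [THEN iffD2, OF subspace_row_space] inj_on_def
    using gram_inj_on_row_space [of _ A] by blast
  have "?G ` row_space A \<subseteq> row_space A" by (auto simp: row_space_def)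
  moreover have "dim (?G ` row_space A) = dim (row_space A)"
    using dim_image_eq [OF lin inj] .
  ultimately have "?G ` row_space A = row_space A"
    using subspace_dim_equal [OF linear_subspace_image [OF lin subspace_row_space [of A]]
        subspace_row_space [of A]] by simp
  moreover have "transpose A *v y \<in> row_space A" by (simp add: row_space_def)
  ultimately show ?thesis by force
qed

definition min_norm_lsq :: "real^'n^'m \<Rightarrow> real^'m \<Rightarrow> real^'n" where
  "min_norm_lsq A y = (THE x. x \<in> row_space A \<and> transpose A *v (A *v x) = transpose A *v y)"

lemma min_norm_lsq:
  fixes A :: "real^'n^'m"
  shows "min_norm_lsq A y \<in> row_space A"
    and "transpose A *v (A *v min_norm_lsq A y) = transpose A *v y"
proof -
  have "\<exists>!x. x \<in> row_space A \<and> transpose A *v (A *v x) = transpose A *v y"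
    using normal_equation_solvable_in_row_space [of A y] gram_inj_on_row_space [of _ A] by metis
  then have "min_norm_lsq A y \<in> row_space A \<and>
      transpose A *v (A *v min_norm_lsq A y) = transpose A *v y"
    unfolding min_norm_lsq_def by (rule theI')
  then show "min_norm_lsq A y \<in> row_space A"
    and "transpose A *v (A *v min_norm_lsq A y) = transpose A *v y" by blast+
qed

lemma min_norm_lsq_unique:
  fixes A :: "real^'n^'m"
  assumes "x \<in> row_space A" "transpose A *v (A *v x) = transpose A *v y"
  shows "min_norm_lsq A y = x"
  by (rule gram_inj_on_row_space [OF min_norm_lsq(1) assms(1)]) (simp add: min_norm_lsq(2) assms(2))

lemma linear_min_norm_lsq: "linear (min_norm_lsq A)"
proof
  fix x y
  show "min_norm_lsq A (x + y) = min_norm_lsq A x + min_norm_lsq A y"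
    by (rule min_norm_lsq_unique)
      (simp_all add: min_norm_lsq subspace_add subspace_row_space matrix_vector_right_distrib)
next
  fix c :: real and x
  show "min_norm_lsq A (c *\<^sub>R x) = c *\<^sub>R min_norm_lsq A x"
    by (rule min_norm_lsq_unique)
      (simp_all add: min_norm_lsq subspace_scale subspace_row_space matrix_vector_mult_scaleR)
qed

lemma symmetric_if_residual_orthogonal:
  fixes P :: "real^'n^'n"
  assumes "\<And>x y. (P *v x - x) \<bullet> (P *v y) = 0"
  shows "transpose P = P"
proof -
  have proj: "x \<bullet> (P *v y) = (P *v x) \<bullet> (P *v y)" for x y
    using assms [of x y] by (simp add: inner_diff_left)
  have "x \<bullet> (transpose P *v y) = x \<bullet> (P *v y)" for x y
  proof -
    have "x \<bullet> (transpose P *v y) = y \<bullet> (P *v x)"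
      by (simp add: inner_transpose_mult inner_commute)
    also have "\<dots> = x \<bullet> (P *v y)"
      by (simp add: proj [of y x] proj [of x y] inner_commute)
    finally show ?thesis .
  qed
  then have "transpose P *v y = P *v y" for y using vector_eq_ldot by blast
  then show ?thesis by (simp add: matrix_eq)
qed

lemma penrose_min_norm_lsq:
  fixes A :: "real^'n^'m"
  shows "penrose A (matrix (min_norm_lsq A))"
proof -
  let ?X = "matrix (min_norm_lsq A)" and ?s = "min_norm_lsq A"
  have X: "?X *v y = ?s y" for y by (simp add: linear_min_norm_lsq)
  have normal: "transpose A *v (A *v ?s y - y) = 0" for y
    by (simp add: min_norm_lsq matrix_vector_mult_diff_distrib)
  have kernel: "A *v (?s (A *v x) - x) = 0" for x
  proof -
    have "transpose A *v (A *v (?s (A *v x) - x)) = 0"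
      using normal [of "A *v x"] by (simp add: matrix_vector_mult_diff_distrib)
    then show ?thesis by (simp only: gram_mult_eq_0_iff)
  qed
  have "A ** ?X ** A = A"
    using kernel by (simp add: matrix_eq matrix_vector_mul_assoc [symmetric] X
        matrix_vector_mult_diff_distrib)
  moreover have "?X ** A ** ?X = ?X"
    by (simp add: matrix_eq matrix_vector_mul_assoc [symmetric] X min_norm_lsq min_norm_lsq_unique)
  moreover have "transpose (A ** ?X) = A ** ?X"
  proof (rule symmetric_if_residual_orthogonal)
    fix x y
    show "((A ** ?X) *v x - x) \<bullet> ((A ** ?X) *v y) = 0"
    proof -
      have "(A *v ?s x - x) \<bullet> (A *v ?s y) = ?s y \<bullet> (transpose A *v (A *v ?s x - x))"
        by (simp add: inner_transpose_mult inner_commute)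
      then show ?thesis by (simp add: matrix_vector_mul_assoc [symmetric] X normal)
    qed
  qed
  moreover have "transpose (?X ** A) = ?X ** A"
  proof (rule symmetric_if_residual_orthogonal)
    fix x y
    show "((?X ** A) *v x - x) \<bullet> ((?X ** A) *v y) = 0"
      using orthogonal_row_space [OF kernel [of x] min_norm_lsq(1)]
      by (simp add: matrix_vector_mul_assoc [symmetric] X)
  qed
  ultimately show ?thesis unfolding penrose_def by blast
qed

lemma penrose_normal_equation:
  fixes A :: "real^'n^'m"
  assumes "penrose A X"
  shows "transpose A ** A ** X = transpose A"
proof -
  have "transpose A ** A ** X = transpose A ** transpose (A ** X)"
    using assms by (simp add: penrose_def matrix_mul_assoc)
  also have "\<dots> = transpose (A ** X ** A)" by (simp add: matrix_transpose_mul matrix_mul_assoc)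
  finally show ?thesis using assms by (simp add: penrose_def)
qed

lemma penrose_range_row_space:
  fixes A :: "real^'n^'m"
  assumes "penrose A X"
  shows "X *v y \<in> row_space A"
proof -
  have "X = transpose (X ** A) ** X" using assms by (simp add: penrose_def)
  also have "\<dots> = transpose A ** (transpose X ** X)"
    by (simp add: matrix_transpose_mul matrix_mul_assoc)
  finally have "X *v y = transpose A *v ((transpose X ** X) *v y)"
    by (simp only: matrix_vector_mul_assoc)
  then show ?thesis unfolding row_space_def by (rule range_eqI)
qed

lemma penrose_eq_min_norm_lsq:
  fixes A :: "real^'n^'m"
  assumes "penrose A X"
  shows "X *v y = min_norm_lsq A y"
proof -
  have "min_norm_lsq A y = X *v y"
  proof (rule min_norm_lsq_unique)
    show "X *v y \<in> row_space A" by (rule penrose_range_row_space [OF assms])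
    show "transpose A *v (A *v (X *v y)) = transpose A *v y"
      using penrose_normal_equation [OF assms] by (simp add: matrix_vector_mul_assoc matrix_mul_assoc)
  qed
  then show ?thesis by simp
qed

lemma penrose_pinv: "penrose A (pinv A)"
proof -
  have "\<exists>!X. penrose A X"
  proof (rule ex1I)
    show "penrose A (matrix (min_norm_lsq A))" by (rule penrose_min_norm_lsq)
  next
    fix X assume "penrose A X"
    then show "X = matrix (min_norm_lsq A)"
      by (simp add: matrix_eq penrose_eq_min_norm_lsq linear_min_norm_lsq)
  qed
  then show ?thesis unfolding pinv_def by (rule theI')
qed

lemma pinv_normal_equation:
  fixes A :: "real^'n^'m"
  shows "transpose A *v (A *v (pinv A *v y)) = transpose A *v y"
  using penrose_normal_equation [OF penrose_pinv, of A]
  by (simp add: matrix_vector_mul_assoc matrix_mul_assoc)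

lemma finite_eigenvalues_symmetric:
  fixes M :: "real^'n^'n"
  assumes "transpose M = M"
  shows "finite (eigenvalues M)"
proof -
  define ev where "ev c = (SOME v. v \<noteq> 0 \<and> M *v v = c *\<^sub>R v)" for c
  have ev: "ev c \<noteq> 0" "M *v ev c = c *\<^sub>R ev c" if "c \<in> eigenvalues M" for c
    using someI_ex [of "\<lambda>v. v \<noteq> 0 \<and> M *v v = c *\<^sub>R v"] that
    by (auto simp: ev_def eigenvalues_def)
  have inj: "inj_on ev (eigenvalues M)"
  proof (rule inj_onI)
    fix c d assume "c \<in> eigenvalues M" "d \<in> eigenvalues M" "ev c = ev d"
    then have "c *\<^sub>R ev c = d *\<^sub>R ev c" "ev c \<noteq> 0" using ev by metis+
    then show "c = d" by (simp add: scaleR_cancel_right)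
  qed
  have "pairwise orthogonal (ev ` eigenvalues M)"
  proof (rule pairwiseI, clarify)
    fix c d assume c: "c \<in> eigenvalues M" and d: "d \<in> eigenvalues M" and "ev c \<noteq> ev d"
    then have "c \<noteq> d" by auto
    have "c * (ev c \<bullet> ev d) = ev d \<bullet> (M *v ev c)" using ev [OF c] by (simp add: inner_commute)
    also have "\<dots> = ev c \<bullet> (M *v ev d)"
      by (metis assms inner_commute inner_transpose_mult)
    also have "\<dots> = d * (ev c \<bullet> ev d)" using ev [OF d] by simp
    finally show "orthogonal (ev c) (ev d)"
      using \<open>c \<noteq> d\<close> by (simp add: orthogonal_def)
  qed
  moreover have "0 \<notin> ev ` eigenvalues M" using ev by auto
  ultimately have "independent (ev ` eigenvalues M)" by (rule pairwise_orthogonal_independent)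
  then have "finite (ev ` eigenvalues M)" using independent_bound by blast
  then show ?thesis using inj by (rule finite_imageD)
qed

lemma norm_mult_attains_min_sphere:
  fixes A :: "real^'n^'m"
  shows "\<exists>v. norm v = 1 \<and> (\<forall>x. norm (A *v v) ^ 2 * norm x ^ 2 \<le> norm (A *v x) ^ 2)"
proof -
  have "sphere (0::real^'n) 1 \<noteq> {}" by simp
  moreover have "continuous_on (sphere 0 1) (\<lambda>x. norm (A *v x) ^ 2)"
    by (intro continuous_intros)
  ultimately obtain v where "v \<in> sphere 0 1"
    and min_sphere: "\<forall>w \<in> sphere 0 1. norm (A *v v) ^ 2 \<le> norm (A *v w) ^ 2"
    using continuous_attains_inf [OF compact_sphere] by blast
  then have v: "norm v = 1" by simp
  have min: "norm (A *v v) ^ 2 \<le> norm (A *v w) ^ 2" if "norm w = 1" for w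
    using min_sphere that by simp
  have "norm (A *v v) ^ 2 * norm x ^ 2 \<le> norm (A *v x) ^ 2" for x
  proof (cases "x = 0")
    case False
    have "norm (A *v v) ^ 2 \<le> norm (A *v ((1 / norm x) *\<^sub>R x)) ^ 2"
      using False by (intro min) simp
    also have "\<dots> = norm (A *v x) ^ 2 / norm x ^ 2"
      by (simp add: matrix_vector_mult_scaleR power_divide)
    finally show ?thesis using False by (simp add: field_simps)
  qed simp
  with v show ?thesis by blast
qed

lemma gram_eigenvector_of_min_norm_mult:
  fixes A :: "real^'n^'m"
  assumes v: "norm v = 1" and min: "\<And>x. norm (A *v v) ^ 2 * norm x ^ 2 \<le> norm (A *v x) ^ 2"
  shows "(transpose A ** A) *v v = norm (A *v v) ^ 2 *\<^sub>R v"
proof -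
  let ?S = "transpose A ** A" and ?\<mu> = "norm (A *v v) ^ 2"
  define Q where "Q x = norm (A *v x) ^ 2 - ?\<mu> * norm x ^ 2" for x
  define d where "d = ?S *v v - ?\<mu> *\<^sub>R v"
  have Q_nonneg: "Q x \<ge> 0" for x using min [of x] by (simp add: Q_def)
  have norm_add_scaleR: "norm (a + t *\<^sub>R c) ^ 2 = norm a ^ 2 + 2 * t * (a \<bullet> c) + t\<^sup>2 * norm c ^ 2"
    for a c :: "'a::real_inner" and t
    unfolding power2_norm_eq_inner
    by (simp add: inner_add_left inner_add_right inner_commute algebra_simps power2_eq_square)
  have "(A *v v) \<bullet> (A *v d) - ?\<mu> * (v \<bullet> d) = d \<bullet> d"
  proof -
    have "(A *v v) \<bullet> (A *v d) = d \<bullet> (?S *v v)"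
      by (simp add: matrix_vector_mul_assoc [symmetric] inner_transpose_mult inner_commute)
    moreover have "d \<bullet> d = d \<bullet> (?S *v v) - d \<bullet> (?\<mu> *\<^sub>R v)"
      by (metis d_def inner_diff_right)
    ultimately show ?thesis by (simp add: inner_commute)
  qed
  \<comment> \<open>\<open>Q \<ge> 0\<close> attains its minimum \<open>0\<close> at \<open>v\<close>, so the linear term \<open>2 t (d \<bullet> d)\<close> of
    \<open>Q\<close> along the line \<open>v + t d\<close> must vanish.\<close>
  then have Q_line: "Q (v + t *\<^sub>R d) = 2 * t * (d \<bullet> d) + t\<^sup>2 * Q d" for t
    using v by (simp add: Q_def norm_add_scaleR matrix_vector_right_distrib
        matrix_vector_mult_scaleR algebra_simps)
  have "d \<bullet> d = 0"
  proof (cases "Q d \<le> 0")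
    case True
    have "2 * (d \<bullet> d) \<le> Q d" using Q_nonneg [of "v + (-1) *\<^sub>R d"] Q_line [of "-1"] by simp
    then show ?thesis using True inner_ge_zero [of d] by linarith
  next
    case False
    let ?t = "- (d \<bullet> d) / Q d"
    have "2 * ?t * (d \<bullet> d) + ?t\<^sup>2 * Q d = - ((d \<bullet> d)\<^sup>2 / Q d)"
      using False by (simp add: field_simps power2_eq_square)
    then have "(d \<bullet> d)\<^sup>2 / Q d \<le> 0" using Q_nonneg [of "v + ?t *\<^sub>R d"] Q_line [of ?t] by simp
    then show ?thesis using False by (simp add: divide_le_0_iff)
  qed
  then show ?thesis by (simp add: d_def)
qed

lemma smallest_eigenvalue_gram:
  fixes A :: "real^'n^'m"
  obtains v where "norm v = 1" "smallest_eigenvalue (transpose A ** A) = norm (A *v v) ^ 2"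
    and "\<And>x. smallest_eigenvalue (transpose A ** A) * norm x ^ 2 \<le> norm (A *v x) ^ 2"
proof -
  let ?S = "transpose A ** A"
  obtain v where v: "norm v = 1" and min: "\<And>x. norm (A *v v) ^ 2 * norm x ^ 2 \<le> norm (A *v x) ^ 2"
    using norm_mult_attains_min_sphere [of A] by auto
  have "v \<noteq> 0" using v by auto
  then have "norm (A *v v) ^ 2 \<in> eigenvalues ?S"
    unfolding eigenvalues_def using gram_eigenvector_of_min_norm_mult [OF v min] by blast
  moreover have "finite (eigenvalues ?S)"
    by (rule finite_eigenvalues_symmetric [OF symmetric_gram])
  moreover have "norm (A *v v) ^ 2 \<le> c" if c: "c \<in> eigenvalues ?S" for c
  proof -
    obtain w where w: "w \<noteq> 0" "?S *v w = c *\<^sub>R w"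
      using c unfolding eigenvalues_def by blast
    have "c * norm w ^ 2 = w \<bullet> (?S *v w)"
      by (simp add: w(2) power2_norm_eq_inner)
    also have "\<dots> = norm (A *v w) ^ 2"
      by (simp add: matrix_vector_mul_assoc [symmetric] inner_gram_mult)
    finally have "c * norm w ^ 2 = norm (A *v w) ^ 2" .
    then have "norm (A *v v) ^ 2 * norm w ^ 2 \<le> c * norm w ^ 2" using min [of w] by simp
    moreover have "norm w ^ 2 > 0" using w(1) by simp
    ultimately show ?thesis by (rule mult_right_le_imp_le)
  qed
  ultimately have eq: "smallest_eigenvalue ?S = norm (A *v v) ^ 2"
    unfolding smallest_eigenvalue_def by (intro Min_eqI)
  show ?thesis by (rule that [OF v]) (simp_all add: eq min)
qed

lemma norm_le_smallest_eigenvalue_gram: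
  fixes A :: "real^'n^'m"
  assumes "inj ((*v) A)" and "norm (A *v x) \<le> c"
  shows "norm x \<le> (1 / sqrt (smallest_eigenvalue (transpose A ** A))) * c"
proof -
  let ?l = "smallest_eigenvalue (transpose A ** A)"
  obtain v where v: "norm v = 1" "?l = norm (A *v v) ^ 2"
    and bound: "\<And>y. ?l * norm y ^ 2 \<le> norm (A *v y) ^ 2"
    using smallest_eigenvalue_gram [of A] by auto
  have "A *v v \<noteq> 0"
    using v(1) injD [OF assms(1), of v 0] by auto
  then have pos: "?l > 0" using v(2) by simp
  have "(sqrt ?l * norm x) ^ 2 \<le> norm (A *v x) ^ 2"
    using bound [of x] pos by (simp add: power_mult_distrib)
  then have "sqrt ?l * norm x \<le> c" using assms(2) by (auto dest: power2_le_imp_le)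
  then show ?thesis using pos by (simp add: field_simps)
qed

lemma regularized_normal_equation_error_bound:
  fixes A :: "real^'n^'m" and L :: "real^'n^'p"
  assumes "\<gamma> \<ge> 0"
    and "((mat 1 + \<gamma> *\<^sub>R (transpose A ** A)) ** (transpose A ** A) + \<gamma> *\<^sub>R (transpose L ** L)) *v e
         = transpose A *v r"
  shows "norm (A *v e) \<le> norm r"
proof -
  let ?S = "transpose A ** A"
  have "e \<bullet> (?S *v (?S *v e)) = (?S *v e) \<bullet> (?S *v e)"
    using inner_transpose_mult [of e ?S "?S *v e"] by (simp add: symmetric_gram)
  moreover have "e \<bullet> ((transpose L ** L) *v e) = norm (L *v e) ^ 2"
    by (simp add: matrix_vector_mul_assoc [symmetric] inner_gram_mult)
  moreover have "e \<bullet> (?S *v e) = norm (A *v e) ^ 2"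
    by (simp add: matrix_vector_mul_assoc [symmetric] inner_gram_mult)
  ultimately have "e \<bullet> (transpose A *v r)
      = norm (A *v e) ^ 2 + \<gamma> * ((?S *v e) \<bullet> (?S *v e)) + \<gamma> * norm (L *v e) ^ 2"
    by (simp add: assms(2) [symmetric] matrix_vector_mult_add_rdistrib matrix_add_ldistrib
        scaleR_matrix_vector_assoc [symmetric] matrix_vector_mul_assoc [symmetric] inner_add_right)
  then have "norm (A *v e) ^ 2 \<le> (A *v e) \<bullet> r"
    using assms(1) by (simp add: inner_transpose_mult)
  also have "\<dots> \<le> norm (A *v e) * norm r" by (rule norm_cauchy_schwarz)
  finally have "norm (A *v e) * norm (A *v e) \<le> norm (A *v e) * norm r"
    by (simp add: power2_eq_square)
  then show ?thesis by (cases "A *v e = 0") simp_all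
qed

lemma pinv_solves_regularized_normal_equation:
  fixes A :: "real^'n^'m" and L :: "real^'n^'p"
  assumes "L *v (pinv A *v b) = g"
  shows "((mat 1 + \<gamma> *\<^sub>R (transpose A ** A)) ** (transpose A ** A) + \<gamma> *\<^sub>R (transpose L ** L))
           *v (pinv A *v b)
         = (mat 1 + \<gamma> *\<^sub>R (transpose A ** A)) *v (transpose A *v b) + \<gamma> *\<^sub>R (transpose L *v g)"
proof -
  let ?R = "mat 1 + \<gamma> *\<^sub>R (transpose A ** A)"
  define u where "u = pinv A *v b"
  have "(?R ** (transpose A ** A) + \<gamma> *\<^sub>R (transpose L ** L)) *v u
      = (?R ** (transpose A ** A)) *v u + (\<gamma> *\<^sub>R (transpose L ** L)) *v u"
    by (rule matrix_vector_mult_add_rdistrib)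
  also have "\<dots> = ?R *v ((transpose A ** A) *v u) + \<gamma> *\<^sub>R (transpose L *v (L *v u))"
    by (simp only: matrix_vector_mul_assoc scaleR_matrix_vector_assoc)
  also have "(transpose A ** A) *v u = transpose A *v b"
    by (simp add: u_def matrix_vector_mul_assoc [symmetric] pinv_normal_equation)
  finally show ?thesis using assms by (simp only: u_def)
qed

lemma regularizer_transpose_commute:
  fixes A :: "real^'n^'m"
  shows "(mat 1 + \<gamma> *\<^sub>R (transpose A ** A)) *v (transpose A *v y)
       = transpose A *v ((mat 1 + \<gamma> *\<^sub>R (A ** transpose A)) *v y)"
  by (simp add: matrix_vector_mult_add_rdistrib matrix_vector_right_distrib matrix_vector_mult_scaleR
      matrix_vector_mul_assoc [symmetric] scaleR_matrix_vector_assoc [symmetric])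

theorem corollary1:
  fixes A :: "real^'n^'m" and b bt :: "real^'m" and L :: "real^'n^'p" and g :: "real^'p"
    and \<gamma> :: real and ut :: "real^'n"
  assumes "\<gamma> > 0"
    and "L *v (pinv A *v b) = g"
    and "((mat 1 + \<gamma> *\<^sub>R (transpose A ** A)) ** (transpose A ** A) + \<gamma> *\<^sub>R (transpose L ** L)) *v ut
         = (mat 1 + \<gamma> *\<^sub>R (transpose A ** A)) *v (transpose A *v bt) + \<gamma> *\<^sub>R (transpose L *v g)"
    and "\<exists>!u. ((mat 1 + \<gamma> *\<^sub>R (transpose A ** A)) ** (transpose A ** A) + \<gamma> *\<^sub>R (transpose L ** L)) *v u
         = (mat 1 + \<gamma> *\<^sub>R (transpose A ** A)) *v (transpose A *v b) + \<gamma> *\<^sub>R (transpose L *v g)"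
  shows "norm (A *v (pinv A *v b) - A *v ut) \<le> norm ((mat 1 + \<gamma> *\<^sub>R (A ** transpose A)) *v (b - bt))
     \<and> ((CARD('n) \<le> CARD('m) \<and> rank A = CARD('n)) \<longrightarrow>
        norm (pinv A *v b - ut) \<le>
          (1 / sqrt (smallest_eigenvalue (transpose A ** A)))
            * norm ((mat 1 + \<gamma> *\<^sub>R (A ** transpose A)) *v (b - bt)))"
\<comment> \<open>Likewise \<open>CARD('n) \<le> CARD('m)\<close> is implied by full column rank.\<close>
proof -
  let ?R = "mat 1 + \<gamma> *\<^sub>R (transpose A ** A)"
  let ?M = "?R ** (transpose A ** A) + \<gamma> *\<^sub>R (transpose L ** L)"
  define r where "r = (mat 1 + \<gamma> *\<^sub>R (A ** transpose A)) *v (b - bt)"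
  have "?M *v (pinv A *v b - ut) = ?R *v (transpose A *v b) - ?R *v (transpose A *v bt)"
    using pinv_solves_regularized_normal_equation [OF assms(2), of \<gamma>] assms(3)
    by (simp add: matrix_vector_mult_diff_distrib)
  also have "\<dots> = transpose A *v r"
    by (simp add: r_def regularizer_transpose_commute [symmetric] matrix_vector_mult_diff_distrib)
  finally have fit: "norm (A *v (pinv A *v b - ut)) \<le> norm r"
    using assms(1) by (intro regularized_normal_equation_error_bound) simp_all
  moreover have "norm (pinv A *v b - ut) \<le> (1 / sqrt (smallest_eigenvalue (transpose A ** A))) * norm r"
    if "rank A = CARD('n)"
    using that fit by (intro norm_le_smallest_eigenvalue_gram) (simp_all add: full_rank_injective)
  ultimately show ?thesis by (simp add: r_def matrix_vector_mult_diff_distrib)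
qed

end
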